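(* Let $k\ge 2$ be an integer. For every real $r$, the polynomial $x^k-x^{k-1}-1$ has at most two complex roots $z$ with $|z|=r$. *)

theory Defs
  imports "HOL-Analysis.Analysis"
begin

end

theory Submission
  imports Defs
begin

text \<open>A root \<open>z\<close> satisfies \<open>z\<^sup>k\<^sup>-\<^sup>1 (z - 1) = 1\<close>, so if \<open>|z| = r\<close> then
  \<open>|z - 1| = 1 / r\<^sup>k\<^sup>-\<^sup>1\<close>: all roots of modulus \<open>r\<close> lie on two circles with distinct
  centres \<open>0\<close> and \<open>1\<close>, and such circles meet in at most two points.\<close>

lemma sphere_0_Int_sphere_1_subset:
  fixes r s :: real
  defines "c \<equiv> (r\<^sup>2 - s\<^sup>2 + 1) / 2"
  shows "sphere (0 :: complex) r \<inter> sphere 1 s \<subseteq>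
           {Complex c (sqrt (r\<^sup>2 - c\<^sup>2)), Complex c (- sqrt (r\<^sup>2 - c\<^sup>2))}"
proof
  fix z :: complex
  assume "z \<in> sphere 0 r \<inter> sphere 1 s"
  then have "cmod z = r" "cmod (z - 1) = s"
    by (simp_all add: dist_norm norm_minus_commute)
  moreover obtain a b where z: "z = Complex a b"
    by (cases z)
  ultimately have r: "a\<^sup>2 + b\<^sup>2 = r\<^sup>2" and "(a - 1)\<^sup>2 + b\<^sup>2 = s\<^sup>2"
    by (auto simp: cmod_def)
  then have a: "a = c"
    unfolding c_def by (simp add: power2_eq_square algebra_simps)
  with r have "b\<^sup>2 = r\<^sup>2 - c\<^sup>2"
    by simp
  then have "b = sqrt (r\<^sup>2 - c\<^sup>2) \<or> b = - sqrt (r\<^sup>2 - c\<^sup>2)"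
    by (metis real_sqrt_abs abs_if neg_equal_iff_equal minus_minus)
  with z a show "z \<in> {Complex c (sqrt (r\<^sup>2 - c\<^sup>2)), Complex c (- sqrt (r\<^sup>2 - c\<^sup>2))}"
    by auto
qed

lemma sphere_Int_sphere_subset_doubleton:
  fixes a b :: complex
  assumes "a \<noteq> b"
  obtains u v where "sphere a r \<inter> sphere b s \<subseteq> {u, v}"
proof -
  define d where "d = cmod (b - a)"
  obtain u v where uv: "sphere 0 (r / d) \<inter> sphere 1 (s / d) \<subseteq> {u, v :: complex}"
    using sphere_0_Int_sphere_1_subset by blast
  have "sphere a r \<inter> sphere b s \<subseteq> (\<lambda>w. a + (b - a) * w) ` {u, v}"
  proof
    fix z
    assume z: "z \<in> sphere a r \<inter> sphere b s"
    define w where "w = (z - a) / (b - a)"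
    have z_eq: "z = a + (b - a) * w"
      using assms by (simp add: w_def)
    have "w - 1 = (z - b) / (b - a)"
      using assms by (simp add: w_def field_simps)
    then have "cmod w = r / d" "cmod (w - 1) = s / d"
      using z by (auto simp: w_def d_def dist_norm norm_minus_commute norm_divide)
    then have "w \<in> {u, v}"
      using uv by (auto simp: dist_norm norm_minus_commute)
    with z_eq show "z \<in> (\<lambda>w. a + (b - a) * w) ` {u, v}"
      by blast
  qed
  then show ?thesis
    using that by auto
qed

lemma sphere_Int_sphere_finite_card_le_2:
  fixes a b :: complex
  assumes "a \<noteq> b"
  shows "finite (sphere a r \<inter> sphere b s) \<and> card (sphere a r \<inter> sphere b s) \<le> 2"
proof -
  obtain u v where uv: "sphere a r \<inter> sphere b s \<subseteq> {u, v}"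
    using sphere_Int_sphere_subset_doubleton[OF assms] .
  then have "card (sphere a r \<inter> sphere b s) \<le> card {u, v}"
    by (simp add: card_mono)
  also have "\<dots> \<le> 2"
    by (simp add: card_insert_if)
  finally show ?thesis
    using uv finite_subset by blast
qed

lemma norm_sub_one_of_root:
  fixes z :: complex
  assumes "k \<ge> 1" and "z ^ k - z ^ (k - 1) - 1 = 0"
  shows "cmod (z - 1) = 1 / cmod z ^ (k - 1)"
proof -
  have "z ^ k = z ^ (k - 1) * z"
    using assms(1) by (simp add: power_eq_if)
  then have "z ^ (k - 1) * (z - 1) = 1"
    using assms(2) by (simp add: algebra_simps)
  then have "cmod z ^ (k - 1) * cmod (z - 1) = 1"
    by (metis norm_mult norm_one norm_power)
  moreover from this have "cmod z ^ (k - 1) \<noteq> 0"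
    by (metis mult_zero_left zero_neq_one)
  ultimately show ?thesis
    by (simp add: field_simps)
qed

theorem mainTheorem5:
  fixes k :: nat and r :: real
  assumes "k \<ge> 2"
  shows "finite {z :: complex. z ^ k - z ^ (k - 1) - 1 = 0 \<and> norm z = r}
       \<and> card {z :: complex. z ^ k - z ^ (k - 1) - 1 = 0 \<and> norm z = r} \<le> 2"
proof -
  let ?S = "{z :: complex. z ^ k - z ^ (k - 1) - 1 = 0 \<and> norm z = r}"
  let ?C = "sphere 0 r \<inter> sphere 1 (1 / r ^ (k - 1)) :: complex set"
  have "?S \<subseteq> ?C"
  proof
    fix z
    assume "z \<in> ?S"
    with assms have "cmod z = r" and "cmod (z - 1) = 1 / r ^ (k - 1)"
      using norm_sub_one_of_root[of k z] by auto
    then show "z \<in> ?C"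
      by (simp add: dist_norm norm_minus_commute)
  qed
  moreover have "finite ?C \<and> card ?C \<le> 2"
    by (rule sphere_Int_sphere_finite_card_le_2) simp
  ultimately show ?thesis
    using card_mono[of ?C ?S] finite_subset[of ?S ?C] by linarith
qed

end
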